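(* Let $k\geq 2$, let $G$ be a graph of order $n$, and let $w$ be a vertex of $G$. Suppose that every connected component $C$ of $G-w$ satisfies either $v(C)=2k$ or $e(C)\leq (k-1)\,v(C)$. If $n\geq 6k+13$, then $q(G)<n+2k-2$.
   Context: All graphs are finite and simple. $G-w$ is the graph obtained from $G$ by deleting the vertex $w$. $v(C)$ and $e(C)$ are the numbers of vertices and edges of $C$. For a graph $G$, the signless Laplacian is $Q(G)=D(G)+A(G)$, where $D(G)$ is the diagonal matrix of vertex degrees and $A(G)$ is the adjacency matrix; $q(G)$ denotes the largest eigenvalue of $Q(G)$. *)

theory Defs
  imports Main "HOL-Analysis.Analysis"
begin

definition simple_graph :: "'a set \<Rightarrow> 'a set set \<Rightarrow> bool" where
  "simple_graph V E \<longleftrightarrow> finite V \<and> (\<forall>e\<in>E. e \<subseteq> V \<and> card e = 2)"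

definition adj :: "'a set set \<Rightarrow> 'a \<Rightarrow> 'a \<Rightarrow> bool" where
  "adj E u v \<longleftrightarrow> {u, v} \<in> E"

definition degree :: "'a set set \<Rightarrow> 'a \<Rightarrow> nat" where
  "degree E v = card {e\<in>E. v \<in> e}"

definition signless_laplacian :: "'a set set \<Rightarrow> 'a \<Rightarrow> 'a \<Rightarrow> real" where
  "signless_laplacian E u v =
     (if u = v then real (degree E u) else 0) + (if adj E u v then 1 else 0)"

definition is_eigenvalue :: "'a set \<Rightarrow> ('a \<Rightarrow> 'a \<Rightarrow> real) \<Rightarrow> real \<Rightarrow> bool" where
  "is_eigenvalue V M mu \<longleftrightarrow>
     (\<exists>x :: 'a \<Rightarrow> real. (\<exists>v\<in>V. x v \<noteq> 0) \<and>
        (\<forall>u\<in>V. (\<Sum>v\<in>V. M u v * x v) = mu * x u))"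

definition q_index :: "'a set \<Rightarrow> 'a set set \<Rightarrow> real" where
  "q_index V E = Max {mu. is_eigenvalue V (signless_laplacian E) mu}"

definition del_vertex_V :: "'a set \<Rightarrow> 'a \<Rightarrow> 'a set" where
  "del_vertex_V V w = V - {w}"

definition del_vertex_E :: "'a set set \<Rightarrow> 'a \<Rightarrow> 'a set set" where
  "del_vertex_E E w = {e\<in>E. w \<notin> e}"

definition reachable :: "'a set \<Rightarrow> 'a set set \<Rightarrow> 'a \<Rightarrow> 'a \<Rightarrow> bool" where
  "reachable V E = (\<lambda>u v. u \<in> V \<and> v \<in> V \<and> adj E u v)\<^sup>*\<^sup>*"

definition components :: "'a set \<Rightarrow> 'a set set \<Rightarrow> 'a set set" where
  "components V E = {{v\<in>V. reachable V E u v} | u. u \<in> V}"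

definition edges_in :: "'a set set \<Rightarrow> 'a set \<Rightarrow> nat" where
  "edges_in E C = card {e\<in>E. e \<subseteq> C}"

end

theory Submission
  imports Defs "Jordan_Normal_Form.Char_Poly"
begin

unbundle no vec_syntax  \<comment> \<open>\<open>$\<close> is vector indexing of Jordan_Normal_Form below\<close>

text \<open>A nonnegative symmetric matrix \<open>Q\<close> admitting a positive vector \<open>z\<close> with \<open>Q z < T z\<close>
  entrywise has all its eigenvalues in \<open>(-T, T)\<close> (the Collatz--Wielandt bound). We apply this
  to the signless Laplacian with \<open>T = n + 2k - 2\<close>, writing \<open>N = n - 1\<close> and \<open>d'\<close> for degrees
  in \<open>G - w\<close>: put \<open>z(w) = N\<close>, \<open>z(v) = 2\<close> on the components of \<open>G - w\<close> with \<open>2k\<close> vertices,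
  and \<open>z(v) = d'(v) + 1 - 1/N\<close> on the remaining components. On the latter the handshake lemma
  and \<open>e(C) \<le> (k - 1) v(C)\<close> bound the sums of \<open>z\<close> over neighbourhoods and over \<open>G - w\<close>,
  and \<open>n \<ge> 6k + 13\<close> makes every row inequality strict.\<close>

section \<open>Eigenvalues of matrices indexed by a finite set\<close>

lemma abs_eigenvalue_less_of_row_bound:
  fixes M :: "'a \<Rightarrow> 'a \<Rightarrow> real" and z :: "'a \<Rightarrow> real"
  assumes fin: "finite V"
    and nonneg: "\<And>u v. u \<in> V \<Longrightarrow> v \<in> V \<Longrightarrow> 0 \<le> M u v"
    and sym: "\<And>u v. u \<in> V \<Longrightarrow> v \<in> V \<Longrightarrow> M u v = M v u"
    and zpos: "\<And>u. u \<in> V \<Longrightarrow> 0 < z u"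
    and row: "\<And>u. u \<in> V \<Longrightarrow> (\<Sum>v\<in>V. M u v * z v) < T * z u"
    and ev: "is_eigenvalue V M \<mu>"
  shows "\<bar>\<mu>\<bar> < T"
proof -
  obtain x where x0: "\<exists>v\<in>V. x v \<noteq> 0" and xe: "\<forall>u\<in>V. (\<Sum>v\<in>V. M u v * x v) = \<mu> * x u"
    using ev unfolding is_eigenvalue_def by blast
  obtain v0 where v0: "v0 \<in> V" "x v0 \<noteq> 0" using x0 by blast
  have abs_sub: "\<bar>\<mu>\<bar> * \<bar>x u\<bar> \<le> (\<Sum>v\<in>V. M u v * \<bar>x v\<bar>)" if u: "u \<in> V" for u
  proof -
    have "\<bar>\<mu>\<bar> * \<bar>x u\<bar> = \<bar>\<Sum>v\<in>V. M u v * x v\<bar>" using xe u by (simp add: abs_mult)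
    also have "\<dots> \<le> (\<Sum>v\<in>V. \<bar>M u v * x v\<bar>)" by (rule sum_abs)
    also have "\<dots> = (\<Sum>v\<in>V. M u v * \<bar>x v\<bar>)"
      by (rule sum.cong) (auto simp: abs_mult nonneg u)
    finally show ?thesis .
  qed
  text \<open>Pair \<open>|x|\<close> with \<open>z\<close>; symmetry moves \<open>M\<close> from \<open>|x|\<close> onto \<open>z\<close>.\<close>
  have "\<bar>\<mu>\<bar> * (\<Sum>u\<in>V. z u * \<bar>x u\<bar>) = (\<Sum>u\<in>V. z u * (\<bar>\<mu>\<bar> * \<bar>x u\<bar>))"
    by (simp add: sum_distrib_left algebra_simps)
  also have "\<dots> \<le> (\<Sum>u\<in>V. z u * (\<Sum>v\<in>V. M u v * \<bar>x v\<bar>))"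
    by (intro sum_mono mult_left_mono abs_sub) (auto simp: zpos less_imp_le)
  also have "\<dots> = (\<Sum>u\<in>V. \<Sum>v\<in>V. z u * M u v * \<bar>x v\<bar>)"
    by (simp add: sum_distrib_left algebra_simps)
  also have "\<dots> = (\<Sum>v\<in>V. \<Sum>u\<in>V. z u * M u v * \<bar>x v\<bar>)" by (rule sum.swap)
  also have "\<dots> = (\<Sum>v\<in>V. \<bar>x v\<bar> * (\<Sum>u\<in>V. M v u * z u))"
    by (rule sum.cong) (auto simp: sum_distrib_left algebra_simps sym intro!: sum.cong)
  also have "\<dots> < (\<Sum>v\<in>V. \<bar>x v\<bar> * (T * z v))"
  proof (rule sum_strict_mono_ex1[OF fin])
    show "\<forall>v\<in>V. \<bar>x v\<bar> * (\<Sum>u\<in>V. M v u * z u) \<le> \<bar>x v\<bar> * (T * z v)"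
      using row by (intro ballI mult_left_mono) (auto simp: less_imp_le)
    show "\<exists>v\<in>V. \<bar>x v\<bar> * (\<Sum>u\<in>V. M v u * z u) < \<bar>x v\<bar> * (T * z v)"
      using v0 row[OF v0(1)] by (intro bexI[of _ v0]) (simp_all add: mult_strict_left_mono)
  qed
  also have "\<dots> = T * (\<Sum>u\<in>V. z u * \<bar>x u\<bar>)"
    by (simp add: sum_distrib_left algebra_simps)
  finally have lt: "\<bar>\<mu>\<bar> * (\<Sum>u\<in>V. z u * \<bar>x u\<bar>) < T * (\<Sum>u\<in>V. z u * \<bar>x u\<bar>)" .
  have "0 < (\<Sum>u\<in>V. z u * \<bar>x u\<bar>)"
    using zpos v0 by (intro sum_pos2[OF fin v0(1)]) (auto simp: less_imp_le)
  with lt show ?thesis by simp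
qed

lemma vec_neq_zeroE:
  assumes "v \<noteq> 0\<^sub>v n" "dim_vec v = n"
  obtains i where "i < n" "v $ i \<noteq> 0"
proof -
  have "\<exists>i<n. v $ i \<noteq> 0"
  proof (rule ccontr)
    assume "\<not> (\<exists>i<n. v $ i \<noteq> 0)"
    then have "v = 0\<^sub>v n" using assms(2) by (intro eq_vecI) auto
    with assms(1) show False ..
  qed
  with that show ?thesis by blast
qed

definition mat_of_enum :: "nat \<Rightarrow> (nat \<Rightarrow> 'a) \<Rightarrow> ('a \<Rightarrow> 'a \<Rightarrow> 'b) \<Rightarrow> 'b mat" where
  "mat_of_enum n f M = mat n n (\<lambda>(i, j). M (f i) (f j))"

lemma eigenvalue_mat_of_enum_if_is_eigenvalue:
  fixes M :: "'a \<Rightarrow> 'a \<Rightarrow> real"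
  assumes bij: "bij_betw f {0..<n} V" and ev: "is_eigenvalue V M \<mu>"
  shows "eigenvalue (mat_of_enum n f M) \<mu>"
proof -
  let ?B = "mat_of_enum n f M"
  obtain x where x0: "\<exists>v\<in>V. x v \<noteq> 0" and xe: "\<forall>u\<in>V. (\<Sum>v\<in>V. M u v * x v) = \<mu> * x u"
    using ev unfolding is_eigenvalue_def by blast
  obtain v0 where v0: "v0 \<in> V" "x v0 \<noteq> 0" using x0 by blast
  then have "v0 \<in> f ` {0..<n}" using bij_betw_imp_surj_on[OF bij] by simp
  then obtain i0 where i0: "i0 < n" "x (f i0) \<noteq> 0" using v0(2) by auto
  define y where "y = vec n (\<lambda>i. x (f i))"
  have "y \<noteq> 0\<^sub>v n"
  proof
    assume "y = 0\<^sub>v n"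
    then have "y $ i0 = 0" using i0 by simp
    with i0 show False by (simp add: y_def)
  qed
  moreover have "?B *\<^sub>v y = \<mu> \<cdot>\<^sub>v y"
  proof (rule eq_vecI)
    fix i assume "i < dim_vec (\<mu> \<cdot>\<^sub>v y)"
    then have i: "i < n" by (simp add: y_def)
    have "(?B *\<^sub>v y) $ i = (\<Sum>j=0..<n. M (f i) (f j) * x (f j))"
      using i by (simp add: mat_of_enum_def scalar_prod_def y_def)
    also have "\<dots> = (\<Sum>v\<in>V. M (f i) v * x v)"
      by (rule sum.reindex_bij_betw[OF bij, of "\<lambda>v. M (f i) v * x v"])
    also have "\<dots> = \<mu> * x (f i)" using xe i bij by (auto simp: bij_betw_def)
    finally show "(?B *\<^sub>v y) $ i = (\<mu> \<cdot>\<^sub>v y) $ i" using i by (simp add: y_def)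
  qed (simp add: mat_of_enum_def y_def)
  ultimately have "eigenvector ?B y \<mu>"
    unfolding eigenvector_def by (simp add: mat_of_enum_def y_def)
  then show ?thesis unfolding eigenvalue_def by blast
qed

lemma is_eigenvalue_if_eigenvalue_mat_of_enum:
  fixes M :: "'a \<Rightarrow> 'a \<Rightarrow> real"
  assumes bij: "bij_betw f {0..<n} V" and ev: "eigenvalue (mat_of_enum n f M) \<mu>"
  shows "is_eigenvalue V M \<mu>"
proof -
  let ?B = "mat_of_enum n f M"
  obtain y where "eigenvector ?B y \<mu>" using ev unfolding eigenvalue_def by blast
  then have ydim: "dim_vec y = n" and y0: "y \<noteq> 0\<^sub>v n" and eq: "?B *\<^sub>v y = \<mu> \<cdot>\<^sub>v y"
    unfolding eigenvector_def by (auto simp: mat_of_enum_def)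
  obtain i0 where i0: "i0 < n" "y $ i0 \<noteq> 0" using y0 ydim by (rule vec_neq_zeroE)
  define g where "g = inv_into {0..<n} f"
  have fV: "\<And>i. i < n \<Longrightarrow> f i \<in> V" using bij by (auto simp: bij_betw_def)
  have gf: "\<And>j. j < n \<Longrightarrow> g (f j) = j"
    unfolding g_def using bij by (auto simp: bij_betw_def intro!: inv_into_f_f)
  have fg: "\<And>u. u \<in> V \<Longrightarrow> f (g u) = u"
    unfolding g_def using bij by (simp add: bij_betw_def f_inv_into_f)
  have gV: "\<And>u. u \<in> V \<Longrightarrow> g u < n"
    unfolding g_def using bij by (metis atLeastLessThan_iff bij_betw_def inv_into_into)
  show ?thesis unfolding is_eigenvalue_def
  proof (intro exI[of _ "\<lambda>u. y $ g u"] conjI ballI)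
    show "\<exists>v\<in>V. y $ g v \<noteq> 0" using i0 fV gf by (intro bexI[of _ "f i0"]) auto
  next
    fix u assume u: "u \<in> V"
    have "(\<Sum>v\<in>V. M u v * y $ g v) = (\<Sum>j=0..<n. M u (f j) * y $ g (f j))"
      by (rule sum.reindex_bij_betw[OF bij, of "\<lambda>v. M u v * y $ g v", symmetric])
    also have "\<dots> = (\<Sum>j=0..<n. M (f (g u)) (f j) * y $ j)" by (simp add: gf fg u)
    also have "\<dots> = (?B *\<^sub>v y) $ g u"
      using gV[OF u] ydim by (simp add: mat_of_enum_def scalar_prod_def)
    also have "\<dots> = \<mu> * y $ g u" using eq gV[OF u] ydim by simp
    finally show "(\<Sum>v\<in>V. M u v * y $ g v) = \<mu> * y $ g u" .
  qed
qed

lemma finite_is_eigenvalue: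
  fixes M :: "'a \<Rightarrow> 'a \<Rightarrow> real"
  assumes "finite V"
  shows "finite {\<mu>. is_eigenvalue V M \<mu>}"
proof -
  obtain f where bij: "bij_betw f {0..<card V} V" using ex_bij_betw_nat_finite[OF assms] by blast
  let ?B = "mat_of_enum (card V) f M"
  have B: "?B \<in> carrier_mat (card V) (card V)" by (simp add: mat_of_enum_def)
  have "{\<mu>. is_eigenvalue V M \<mu>} \<subseteq> {\<mu>. poly (char_poly ?B) \<mu> = 0}"
    using eigenvalue_root_char_poly[OF B] eigenvalue_mat_of_enum_if_is_eigenvalue[OF bij] by auto
  moreover have "char_poly ?B \<noteq> 0"
  proof
    assume "char_poly ?B = 0"
    then show False using degree_monic_char_poly[OF B] by simp
  qed
  ultimately show ?thesis using poly_roots_finite finite_subset by blast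
qed

lemma eigenvector_of_real_mat_row:
  fixes B :: "real mat"
  assumes "B \<in> carrier_mat n n" "eigenvector (map_mat complex_of_real B) v l" "i < n"
  shows "(\<Sum>j=0..<n. complex_of_real (B $$ (i, j)) * v $ j) = l * v $ i"
proof -
  have v: "v \<in> carrier_vec n" and eq: "map_mat complex_of_real B *\<^sub>v v = l \<cdot>\<^sub>v v"
    using assms(1,2) unfolding eigenvector_def by auto
  have "(map_mat complex_of_real B *\<^sub>v v) $ i = (\<Sum>j=0..<n. complex_of_real (B $$ (i, j)) * v $ j)"
    using assms(1,3) v by (simp add: scalar_prod_def)
  then show ?thesis using eq assms(3) v by simp
qed

lemma eigenvalue_of_real_symmetric_is_real:
  fixes B :: "real mat"
  assumes B: "B \<in> carrier_mat n n"
    and sym: "\<And>i j. i < n \<Longrightarrow> j < n \<Longrightarrow> B $$ (i, j) = B $$ (j, i)"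
    and v: "eigenvector (map_mat complex_of_real B) v l"
  shows "Im l = 0"
proof -
  define c where "c i = v $ i" for i
  define a where "a i j = complex_of_real (B $$ (i, j))" for i j
  have vdim: "dim_vec v = n" and v0: "v \<noteq> 0\<^sub>v n" using v B unfolding eigenvector_def by auto
  obtain i0 where "i0 < n" "v $ i0 \<noteq> 0" using vec_neq_zeroE[OF v0 vdim] .
  then have i0: "i0 < n" "c i0 \<noteq> 0" by (simp_all add: c_def)
  have row: "(\<Sum>j=0..<n. a i j * c j) = l * c i" if "i < n" for i
    using eigenvector_of_real_mat_row[OF B v that] unfolding a_def c_def .
  define r where "r = (\<Sum>i=0..<n. (cmod (c i))\<^sup>2)"
  have "0 < r" unfolding r_def by (rule sum_pos2[of _ i0]) (use i0 in auto)
  text \<open>The Hermitian form \<open>c\<^sup>* A c\<close> equals \<open>l |c|\<^sup>2\<close> and is real.\<close>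
  define s where "s = (\<Sum>i=0..<n. cnj (c i) * (\<Sum>j=0..<n. a i j * c j))"
  have s_eq: "s = l * complex_of_real r"
  proof -
    have "s = (\<Sum>i=0..<n. l * (cnj (c i) * c i))" unfolding s_def
      by (rule sum.cong) (auto simp: row)
    also have "\<dots> = l * (\<Sum>i=0..<n. complex_of_real ((cmod (c i))\<^sup>2))"
    proof -
      have "\<And>z. cnj z * z = complex_of_real ((cmod z)\<^sup>2)"
        by (simp add: complex_norm_square mult.commute del: of_real_power)
      then show ?thesis by (simp add: sum_distrib_left del: of_real_power)
    qed
    finally show ?thesis unfolding r_def by simp
  qed
  have "cnj s = s"
  proof -
    have "cnj s = (\<Sum>i=0..<n. \<Sum>j=0..<n. a i j * (c i * cnj (c j)))"
      unfolding s_def a_def by (simp add: sum_distrib_left algebra_simps)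
    also have "\<dots> = (\<Sum>j=0..<n. \<Sum>i=0..<n. a i j * (c i * cnj (c j)))"
      by (rule sum.swap)
    also have "\<dots> = (\<Sum>j=0..<n. \<Sum>i=0..<n. a j i * (cnj (c j) * c i))"
      by (intro sum.cong refl) (auto simp: a_def sym mult.commute)
    also have "\<dots> = s" unfolding s_def by (simp add: sum_distrib_left algebra_simps)
    finally show ?thesis .
  qed
  from arg_cong[OF this, of Im] have "Im s = 0" by simp
  then have "Im l * r = 0" using s_eq by simp
  with \<open>0 < r\<close> show ?thesis by simp
qed

lemma real_symmetric_mat_has_eigenvalue:
  fixes B :: "real mat"
  assumes B: "B \<in> carrier_mat n n" and n: "0 < n"
    and sym: "\<And>i j. i < n \<Longrightarrow> j < n \<Longrightarrow> B $$ (i, j) = B $$ (j, i)"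
  shows "\<exists>\<mu>. eigenvalue B \<mu>"
proof -
  let ?A = "map_mat complex_of_real B"
  have A: "?A \<in> carrier_mat n n" using B by simp
  have "Polynomial.degree (char_poly ?A) = n" using degree_monic_char_poly[OF A] by simp
  then have "\<not> constant (poly (char_poly ?A))" using n by (simp add: constant_degree)
  then obtain l where "poly (char_poly ?A) l = 0" using fundamental_theorem_of_algebra by blast
  then obtain v where v: "eigenvector ?A v l"
    using eigenvalue_root_char_poly[OF A] unfolding eigenvalue_def by blast
  have real: "Im l = 0" by (rule eigenvalue_of_real_symmetric_is_real[OF B sym v])
  have vdim: "dim_vec v = n" and v0: "v \<noteq> 0\<^sub>v n" using v B unfolding eigenvector_def by auto
  text \<open>Since \<open>l\<close> is real, both the real and the imaginary part of \<open>v\<close> solve \<open>B x = l x\<close>.\<close>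
  have parts: "B *\<^sub>v map_vec p v = Re l \<cdot>\<^sub>v map_vec p v" if p: "p = Re \<or> p = Im" for p
  proof (rule eq_vecI)
    fix i assume "i < dim_vec (Re l \<cdot>\<^sub>v map_vec p v)"
    then have i: "i < n" using vdim by simp
    have "p (\<Sum>j=0..<n. complex_of_real (B $$ (i, j)) * v $ j) = p (l * v $ i)"
      using eigenvector_of_real_mat_row[OF B v i] by simp
    then show "(B *\<^sub>v map_vec p v) $ i = (Re l \<cdot>\<^sub>v map_vec p v) $ i"
      using p i vdim B real by (auto simp: scalar_prod_def)
  qed (use B vdim in simp)
  obtain i0 where i0: "i0 < n" "v $ i0 \<noteq> 0" using vec_neq_zeroE[OF v0 vdim] .
  have "Re (v $ i0) \<noteq> 0 \<or> Im (v $ i0) \<noteq> 0" using i0(2) complex_eq_iff by auto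
  then obtain p where p: "p = Re \<or> p = Im" "p (v $ i0) \<noteq> 0" by blast
  have "map_vec p v \<noteq> 0\<^sub>v n"
  proof
    assume "map_vec p v = 0\<^sub>v n"
    then have "map_vec p v $ i0 = 0" using i0 by simp
    with p i0 vdim show False by simp
  qed
  then have "eigenvector B (map_vec p v) (Re l)"
    using parts[OF p(1)] B vdim unfolding eigenvector_def by auto
  then show ?thesis unfolding eigenvalue_def by blast
qed

lemma symmetric_ex_is_eigenvalue:
  fixes M :: "'a \<Rightarrow> 'a \<Rightarrow> real"
  assumes "finite V" "V \<noteq> {}" and sym: "\<And>u v. u \<in> V \<Longrightarrow> v \<in> V \<Longrightarrow> M u v = M v u"
  shows "\<exists>\<mu>. is_eigenvalue V M \<mu>"
proof -
  obtain f where bij: "bij_betw f {0..<card V} V" using ex_bij_betw_nat_finite[OF assms(1)] by blast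
  have fV: "\<And>i. i < card V \<Longrightarrow> f i \<in> V" using bij by (auto simp: bij_betw_def)
  have "\<exists>\<mu>. eigenvalue (mat_of_enum (card V) f M) \<mu>"
    by (rule real_symmetric_mat_has_eigenvalue[where n = "card V"])
      (use assms fV in \<open>auto simp: mat_of_enum_def card_gt_0_iff\<close>)
  then show ?thesis using is_eigenvalue_if_eigenvalue_mat_of_enum[OF bij] by blast
qed

lemma signless_laplacian_commute: "signless_laplacian E u v = signless_laplacian E v u"
  by (simp add: signless_laplacian_def adj_def insert_commute)

lemma signless_laplacian_nonneg: "0 \<le> signless_laplacian E u v"
  by (simp add: signless_laplacian_def)

lemma q_index_is_eigenvalue:
  assumes "finite V" "V \<noteq> {}"
  shows "is_eigenvalue V (signless_laplacian E) (q_index V E)"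
proof -
  let ?S = "{\<mu>. is_eigenvalue V (signless_laplacian E) \<mu>}"
  have "\<exists>\<mu>. is_eigenvalue V (signless_laplacian E) \<mu>"
    by (rule symmetric_ex_is_eigenvalue[OF assms]) (rule signless_laplacian_commute)
  then have "?S \<noteq> {}" by blast
  then have "Max ?S \<in> ?S" using Max_in[OF finite_is_eigenvalue[OF assms(1)]] by blast
  then show ?thesis unfolding q_index_def by simp
qed

lemma q_index_less_of_row_bound:
  fixes z :: "'a \<Rightarrow> real"
  assumes "finite V" "V \<noteq> {}"
    and "\<And>u. u \<in> V \<Longrightarrow> 0 < z u"
    and "\<And>u. u \<in> V \<Longrightarrow> (\<Sum>v\<in>V. signless_laplacian E u v * z v) < T * z u"
  shows "q_index V E < T"
proof -
  have "\<bar>q_index V E\<bar> < T"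
  proof (rule abs_eigenvalue_less_of_row_bound[where z = z])
    show "is_eigenvalue V (signless_laplacian E) (q_index V E)"
      using q_index_is_eigenvalue[OF assms(1,2)] .
  qed (use assms in \<open>auto simp: signless_laplacian_nonneg signless_laplacian_commute\<close>)
  then show ?thesis by linarith
qed

section \<open>Neighbourhoods and components of simple graphs\<close>

definition neighbours :: "'a set set \<Rightarrow> 'a \<Rightarrow> 'a set" where
  "neighbours E u = {v. adj E u v}"

definition component :: "'a set \<Rightarrow> 'a set set \<Rightarrow> 'a \<Rightarrow> 'a set" where
  "component V E u = {v\<in>V. reachable V E u v}"

lemma components_eq_image_component: "components V E = component V E ` V"
  unfolding components_def component_def by blast

lemma reachable_sym:
  assumes "reachable V E u v"
  shows "reachable V E v u"
proof -
  have "symp (\<lambda>u v. u \<in> V \<and> v \<in> V \<and> adj E u v)"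
    by (auto simp: symp_def adj_def insert_commute)
  then have "symp (\<lambda>u v. u \<in> V \<and> v \<in> V \<and> adj E u v)\<^sup>*\<^sup>*" by (rule symp_rtranclp)
  then show ?thesis using assms unfolding reachable_def by (rule sympD)
qed

lemma component_subset: "component V E u \<subseteq> V"
  unfolding component_def by auto

lemma self_in_component: "u \<in> V \<Longrightarrow> u \<in> component V E u"
  unfolding component_def reachable_def by simp

lemma component_eq:
  assumes "v \<in> component V E u"
  shows "component V E v = component V E u"
proof -
  let ?R = "\<lambda>u v. u \<in> V \<and> v \<in> V \<and> adj E u v"
  have uv: "?R\<^sup>*\<^sup>* u v" and vu: "?R\<^sup>*\<^sup>* v u"
    using assms reachable_sym[of V E u v] unfolding component_def reachable_def by auto
  show ?thesis unfolding component_def reachable_def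
    using rtranclp_trans[OF uv] rtranclp_trans[OF vu] by blast
qed

lemma sum_le_by_components:
  fixes f :: "'a \<Rightarrow> real" and c :: real
  assumes fin: "finite V"
    and comp: "\<And>u. u \<in> V \<Longrightarrow> (\<Sum>v\<in>component V E u. f v) \<le> c * card (component V E u)"
  shows "(\<Sum>v\<in>V. f v) \<le> c * card V"
proof -
  define CC where "CC = component V E ` V"
  have union: "\<Union>CC = V"
    unfolding CC_def using component_subset[of V E] self_in_component[of _ V E] by blast
  have finCC: "\<forall>A\<in>CC. finite A"
    unfolding CC_def using component_subset[of V E] fin finite_subset by blast
  have disj: "\<forall>A\<in>CC. \<forall>B\<in>CC. A \<noteq> B \<longrightarrow> A \<inter> B = {}"
  proof (intro ballI impI)
    fix A B assume "A \<in> CC" "B \<in> CC" "A \<noteq> B"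
    then obtain a b where "A = component V E a" "B = component V E b" unfolding CC_def by blast
    with \<open>A \<noteq> B\<close> show "A \<inter> B = {}"
      using component_eq[of _ V E a] component_eq[of _ V E b] by blast
  qed
  have "(\<Sum>v\<in>V. f v) = (\<Sum>A\<in>CC. \<Sum>v\<in>A. f v)"
    using sum.Union_disjoint[OF finCC disj, of f] union by simp
  also have "\<dots> \<le> (\<Sum>A\<in>CC. c * card A)"
    using comp by (intro sum_mono) (auto simp: CC_def)
  also have "\<dots> = c * real (\<Sum>A\<in>CC. card A)"
    by (simp add: sum_distrib_left)
  also have "(\<Sum>A\<in>CC. card A) = card V"
    using sum.Union_disjoint[OF finCC disj, of "\<lambda>_. 1::nat"] union by simp
  finally show ?thesis .
qed

context
  fixes V :: "'a set" and E :: "'a set set"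
  assumes G: "simple_graph V E"
begin

lemma finite_vertices: "finite V"
  using G by (simp add: simple_graph_def)

lemma finite_edges: "finite E"
proof -
  have "E \<subseteq> Pow V" using G by (auto simp: simple_graph_def)
  then show ?thesis by (rule finite_subset) (simp add: finite_vertices)
qed

lemma edgeE:
  assumes "e \<in> E"
  obtains a b where "e = {a, b}" "a \<noteq> b" "a \<in> V" "b \<in> V"
proof -
  have "card e = 2" "e \<subseteq> V" using G assms by (auto simp: simple_graph_def)
  then obtain a b where "e = {a, b}" "a \<noteq> b" by (auto simp: card_2_iff)
  with that \<open>e \<subseteq> V\<close> show ?thesis by auto
qed

lemma adj_vertices:
  assumes "adj E u v"
  shows "u \<noteq> v" "u \<in> V" "v \<in> V"
proof -
  obtain a b where "{u, v} = {a, b}" "a \<noteq> b" "a \<in> V" "b \<in> V"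
    using assms unfolding adj_def by (rule edgeE)
  then show "u \<noteq> v" "u \<in> V" "v \<in> V" by (auto simp: doubleton_eq_iff)
qed

lemma neighbours_subset: "neighbours E u \<subseteq> V - {u}"
  using adj_vertices unfolding neighbours_def by blast

lemma finite_component: "finite (component V E u)"
  using component_subset[of V E u] finite_vertices by (rule finite_subset)

lemma finite_neighbours: "finite (neighbours E u)"
  using neighbours_subset finite_vertices by (meson finite_Diff finite_subset)

lemma card_neighbours: "card (neighbours E u) = degree E u"
proof -
  have "bij_betw (\<lambda>v. {u, v}) (neighbours E u) {e\<in>E. u \<in> e}"
  proof (rule bij_betwI')
    fix x y
    show "({u, x} = {u, y}) = (x = y)" by (metis doubleton_eq_iff)
  next
    fix x assume "x \<in> neighbours E u"
    then show "{u, x} \<in> {e\<in>E. u \<in> e}" by (simp add: neighbours_def adj_def)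
  next
    fix e assume "e \<in> {e\<in>E. u \<in> e}"
    then have e: "e \<in> E" "u \<in> e" by auto
    then obtain a b where ab: "e = {a, b}" by (meson edgeE)
    let ?x = "if u = a then b else a"
    have "e = {u, ?x}" using ab e by auto
    with e show "\<exists>x\<in>neighbours E u. e = {u, x}"
      by (intro bexI[of _ ?x]) (auto simp: neighbours_def adj_def)
  qed
  then show ?thesis unfolding degree_def by (simp add: bij_betw_same_card)
qed

lemma neighbours_subset_component:
  assumes "u \<in> V"
  shows "neighbours E u \<subseteq> component V E u"
proof
  fix v assume "v \<in> neighbours E u"
  then have "adj E u v" "v \<in> V" using adj_vertices by (auto simp: neighbours_def)
  with assms show "v \<in> component V E u"
    unfolding component_def reachable_def by (auto intro: r_into_rtranclp)
qed

lemma degree_less_card_component: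
  assumes "u \<in> V"
  shows "degree E u < card (component V E u)"
proof -
  have fin: "finite (component V E u)" by (rule finite_component)
  have "neighbours E u \<subseteq> component V E u - {u}"
    using neighbours_subset_component[OF assms] neighbours_subset by blast
  then have "degree E u \<le> card (component V E u - {u})"
    unfolding card_neighbours[symmetric] using fin by (intro card_mono) auto
  also have "\<dots> < card (component V E u)"
    using fin self_in_component[OF assms] by (rule card_Diff1_less)
  finally show ?thesis .
qed

lemma degree_less_card:
  assumes "u \<in> V"
  shows "degree E u < card V"
proof -
  have "card (component V E u) \<le> card V"
    by (intro card_mono finite_vertices component_subset)
  with degree_less_card_component[OF assms] show ?thesis by linarith
qed

lemma edge_subset_component:
  assumes "e \<in> E" "u \<in> e"
  shows "e \<subseteq> component V E u"
proof -
  obtain a b where "e = {a, b}" "a \<noteq> b" "a \<in> V" "b \<in> V" using assms(1) by (rule edgeE)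
  with assms have "u \<in> V" "e - {u} \<subseteq> neighbours E u"
    by (auto simp: neighbours_def adj_def insert_commute)
  then show ?thesis using neighbours_subset_component self_in_component[of u V E] by blast
qed

lemma degree_pos_in_component:
  assumes "v \<in> component V E u" "v \<noteq> u"
  shows "0 < degree E v"
proof -
  have "(\<lambda>u v. u \<in> V \<and> v \<in> V \<and> adj E u v)\<^sup>*\<^sup>* u v"
    using assms(1) unfolding component_def reachable_def by simp
  then obtain a where "adj E a v"
    using assms(2) by (cases rule: rtranclp.cases) auto
  then have "a \<in> neighbours E v" by (simp add: neighbours_def adj_def insert_commute)
  then show ?thesis using finite_neighbours card_neighbours by (metis card_gt_0_iff empty_iff)
qed

lemma sum_degree_component:
  assumes "u \<in> V"
  shows "(\<Sum>v\<in>component V E u. degree E v) = 2 * edges_in E (component V E u)"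
proof -
  define C where "C = component V E u"
  define EC where "EC = {e\<in>E. e \<subseteq> C}"
  have finC: "finite C" unfolding C_def by (rule finite_component)
  have finEC: "finite EC" unfolding EC_def using finite_edges by simp
  have "degree E v = (\<Sum>e\<in>EC. if v \<in> e then 1 else 0)" if "v \<in> C" for v
  proof -
    have "{e\<in>E. v \<in> e} = {e\<in>EC. v \<in> e}"
      using edge_subset_component component_eq[of v V E u] that unfolding EC_def C_def by blast
    then show ?thesis unfolding degree_def using finEC by (simp add: sum.If_cases Int_def)
  qed
  then have "(\<Sum>v\<in>C. degree E v) = (\<Sum>v\<in>C. \<Sum>e\<in>EC. if v \<in> e then 1 else 0)" by simp
  also have "\<dots> = (\<Sum>e\<in>EC. \<Sum>v\<in>C. if v \<in> e then 1 else 0)" by (rule sum.swap)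
  also have "\<dots> = (\<Sum>e\<in>EC. 2)"
  proof (rule sum.cong[OF refl])
    fix e assume e: "e \<in> EC"
    have "(\<Sum>v\<in>C. if v \<in> e then 1 else 0) = card {v\<in>C. v \<in> e}"
      using finC by (simp add: sum.If_cases Int_def)
    also have "{v\<in>C. v \<in> e} = e" using e unfolding EC_def by auto
    also have "card e = 2" using G e unfolding EC_def simple_graph_def by simp
    finally show "(\<Sum>v\<in>C. if v \<in> e then 1 else 0) = (2::nat)" .
  qed
  also have "\<dots> = 2 * card EC" by simp
  finally show ?thesis unfolding edges_in_def EC_def C_def by simp
qed

lemma sum_degree_neighbours_le:
  assumes u: "u \<in> V"
  shows "(\<Sum>v\<in>neighbours E u. degree E v) + card (component V E u)
           \<le> 2 * edges_in E (component V E u) + 1"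
proof -
  define C where "C = component V E u"
  define R where "R = C - {u} - neighbours E u"
  have finC: "finite C" unfolding C_def by (rule finite_component)
  have uC: "u \<in> C" unfolding C_def using self_in_component[OF u] .
  have nbC: "neighbours E u \<subseteq> C - {u}"
    unfolding C_def using neighbours_subset_component[OF u] neighbours_subset by blast
  have "(\<Sum>v\<in>C. degree E v) = degree E u + (\<Sum>v\<in>C - {u}. degree E v)"
    using finC uC by (simp add: sum.remove)
  also have "(\<Sum>v\<in>C - {u}. degree E v) = (\<Sum>v\<in>neighbours E u. degree E v) + (\<Sum>v\<in>R. degree E v)"
    unfolding R_def using finC nbC by (metis finite_Diff sum.subset_diff add.commute)
  finally have split: "(\<Sum>v\<in>C. degree E v)
      = degree E u + (\<Sum>v\<in>neighbours E u. degree E v) + (\<Sum>v\<in>R. degree E v)" by simp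
  text \<open>Every vertex of the component outside \<open>N[u]\<close> has degree at least one.\<close>
  have "card R \<le> (\<Sum>v\<in>R. degree E v)"
  proof -
    have "card R = (\<Sum>v\<in>R. 1)" by simp
    also have "\<dots> \<le> (\<Sum>v\<in>R. degree E v)"
      by (rule sum_mono) (use degree_pos_in_component[of _ u] in \<open>auto simp: R_def C_def Suc_le_eq\<close>)
    finally show ?thesis .
  qed
  moreover have "card R = card C - 1 - degree E u"
  proof -
    have "card R = card (C - {u}) - card (neighbours E u)"
      unfolding R_def using nbC finite_neighbours by (simp add: card_Diff_subset)
    then show ?thesis using uC finC card_neighbours by simp
  qed
  moreover have "degree E u < card C" unfolding C_def by (rule degree_less_card_component[OF u])
  moreover have "(\<Sum>v\<in>C. degree E v) = 2 * edges_in E C"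
    unfolding C_def by (rule sum_degree_component[OF u])
  ultimately show ?thesis using split unfolding C_def[symmetric] by linarith
qed

lemma signless_laplacian_row:
  assumes u: "u \<in> V"
  shows "(\<Sum>v\<in>V. signless_laplacian E u v * z v)
           = real (degree E u) * z u + (\<Sum>v\<in>neighbours E u. z v)"
proof -
  have "(\<Sum>v\<in>V. signless_laplacian E u v * z v)
        = (\<Sum>v\<in>V. (if u = v then real (degree E u) * z v else 0) + (if adj E u v then z v else 0))"
    unfolding signless_laplacian_def by (rule sum.cong) (auto simp: algebra_simps)
  also have "\<dots> = real (degree E u) * z u + (\<Sum>v\<in>V. if adj E u v then z v else 0)"
    using u finite_vertices by (simp add: sum.distrib)
  also have "(\<Sum>v\<in>V. if adj E u v then z v else 0) = (\<Sum>v\<in>{v\<in>V. adj E u v}. z v)"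
    using finite_vertices by (simp add: sum.inter_filter)
  also have "{v\<in>V. adj E u v} = neighbours E u"
    using neighbours_subset by (auto simp: neighbours_def)
  finally show ?thesis .
qed

end

lemma simple_graph_del_vertex:
  "simple_graph V E \<Longrightarrow> simple_graph (del_vertex_V V w) (del_vertex_E E w)"
  unfolding simple_graph_def del_vertex_V_def del_vertex_E_def by auto

lemma neighbours_subset_del_vertex:
  "u \<noteq> w \<Longrightarrow> neighbours E u \<subseteq> insert w (neighbours (del_vertex_E E w) u)"
  unfolding neighbours_def adj_def del_vertex_E_def by auto

lemma degree_le_degree_del_vertex:
  assumes G: "simple_graph V E" and "u \<noteq> w"
  shows "degree E u \<le> degree (del_vertex_E E w) u + 1"
proof -
  have G': "simple_graph (del_vertex_V V w) (del_vertex_E E w)"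
    using G by (rule simple_graph_del_vertex)
  have "degree E u = card (neighbours E u)" using card_neighbours[OF G] by simp
  also have "\<dots> \<le> card (insert w (neighbours (del_vertex_E E w) u))"
    using finite_neighbours[OF G'] neighbours_subset_del_vertex[OF \<open>u \<noteq> w\<close>]
    by (intro card_mono) auto
  also have "\<dots> \<le> degree (del_vertex_E E w) u + 1"
    using finite_neighbours[OF G'] card_neighbours[OF G'] by (simp add: card_insert_if)
  finally show ?thesis .
qed

section \<open>The two row inequalities for sparse components\<close>

lemma low_degree_row_ineq:
  fixes d k m :: nat
  assumes m: "6 * k + 12 \<le> m" and k: "2 \<le> k" and d: "d + 3 \<le> 2 * k"
  shows "(real d + 1) * (real d + 1 - 1 / real m) + real m + real d * real m
           < (real m + 2 * real k - 1) * (real d + 1 - 1 / real m)"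
proof -
  define N K D e where "N = real m" and "K = real k" and "D = real d" and "e = 1 / real m"
  have N: "24 \<le> N" and K: "2 \<le> K" and D: "D \<le> 2 * K - 3"
    using m k d unfolding N_def K_def D_def by linarith+
  then have Ne: "N * e = 1" and e: "0 < e" "e \<le> 1 / 4"
    unfolding e_def N_def by (simp_all add: field_simps)
  have key: "1 < (2 * K - 2 - D) * (D + 1 - e)"
  proof (cases "d = 0")
    case True
    have "1 < 2 * (1 - e)" using e by simp
    also have "\<dots> \<le> (2 * K - 2) * (1 - e)" using K e by (intro mult_right_mono) auto
    also have "\<dots> = (2 * K - 2 - D) * (D + 1 - e)" using True by (simp add: D_def)
    finally show ?thesis .
  next
    case False
    then have "1 \<le> D" unfolding D_def by simp
    then have "1 < 1 * (D + 1 - e)" using e by simp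
    also have "\<dots> \<le> (2 * K - 2 - D) * (D + 1 - e)"
      using D e \<open>1 \<le> D\<close> by (intro mult_right_mono) auto
    finally show ?thesis .
  qed
  have diff: "(N + 2 * K - 1) * (D + 1 - e) - ((D + 1) * (D + 1 - e) + N + D * N)
          = (2 * K - 2 - D) * (D + 1 - e) - N * e"
    by (simp add: algebra_simps)
  have "0 < (N + 2 * K - 1) * (D + 1 - e) - ((D + 1) * (D + 1 - e) + N + D * N)"
    unfolding diff Ne using key by simp
  then show ?thesis unfolding N_def K_def D_def e_def by (simp only: diff_gt_0_iff_gt)
qed

lemma high_degree_row_ineq:
  fixes d k m :: nat
  assumes m: "6 * k + 12 \<le> m" and k: "2 \<le> k" and d: "2 * k \<le> d + 2" "d < m"
  shows "(real d + 1) * (real d + 1 - 1 / real m) + real m + ((2 * real k - 3) * real m + 1)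
           + real d * (1 - 1 / real m) < (real m + 2 * real k - 1) * (real d + 1 - 1 / real m)"
proof -
  define N K D e where "N = real m" and "K = real k" and "D = real d" and "e = 1 / real m"
  have NK: "6 * K + 12 \<le> N" and K: "2 \<le> K" and D: "2 * K - 2 \<le> D"
    using m k d unfolding N_def K_def D_def by linarith+
  then have Ne: "N * e = 1" and e: "0 < e" unfolding e_def N_def by (simp_all add: field_simps)
  define P Q where "P = (D + 3 - 2 * K) * (N - D - 1)"
    and "Q = e * (2 * (D + 1)) - N * e - e * (2 * K)"
  text \<open>If \<open>d + 1 = m\<close> then \<open>P = 0\<close> but \<open>Q > 0\<close>; otherwise \<open>P \<ge> 1 > -Q\<close>.\<close>
  have "0 < P + Q"
  proof (cases "d + 1 = m")
    case True
    then have "N = D + 1" unfolding N_def D_def by simp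
    then have "P = 0" and "Q = e * (N - 2 * K)" unfolding P_def Q_def by (simp_all add: algebra_simps)
    moreover have "0 < e * (N - 2 * K)" using e NK K by (intro mult_pos_pos) auto
    ultimately show ?thesis by simp
  next
    case False
    then have "1 \<le> N - D - 1" using d unfolding N_def D_def by linarith
    moreover have "1 \<le> D + 3 - 2 * K" using D by linarith
    ultimately have "1 * 1 \<le> (D + 3 - 2 * K) * (N - D - 1)" by (intro mult_mono) auto
    then have "1 \<le> P" unfolding P_def by simp
    define R where "R = e * (2 * (D + 1) - 2 * K)"
    have "0 < R" unfolding R_def using e D K by (intro mult_pos_pos) auto
    moreover have "Q = R - 1" unfolding Q_def R_def using Ne by (simp add: algebra_simps)
    ultimately show ?thesis using \<open>1 \<le> P\<close> by linarith
  qed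
  moreover have diff: "(N + 2 * K - 1) * (D + 1 - e)
      - ((D + 1) * (D + 1 - e) + N + ((2 * K - 3) * N + 1) + D * (1 - e)) = P + Q"
    unfolding P_def Q_def by (simp add: algebra_simps)
  ultimately have "0 < (N + 2 * K - 1) * (D + 1 - e)
      - ((D + 1) * (D + 1 - e) + N + ((2 * K - 3) * N + 1) + D * (1 - e))"
    by (simp only: diff)
  then show ?thesis unfolding N_def K_def D_def e_def by (simp only: diff_gt_0_iff_gt)
qed

section \<open>The weight vector\<close>

locale sparse_components_minus_vertex =
  fixes V :: "'a set" and E :: "'a set set" and w :: 'a and k :: nat
  assumes simple: "simple_graph V E" and k_ge_2: "2 \<le> k" and w_in_V: "w \<in> V"
    and component_condition: "\<forall>C\<in>components (del_vertex_V V w) (del_vertex_E E w).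
           card C = 2 * k \<or> edges_in (del_vertex_E E w) C \<le> (k - 1) * card C"
    and large: "6 * k + 13 \<le> card V"
begin

abbreviation V' where "V' \<equiv> del_vertex_V V w"
abbreviation E' where "E' \<equiv> del_vertex_E E w"

definition N :: real where "N = real (card V')"

definition weight :: "'a \<Rightarrow> real" where
  "weight v = (if v = w then N
     else if card (component V' E' v) = 2 * k then 2
     else real (degree E' v) + 1 - 1 / N)"

lemma simple_del_vertex: "simple_graph V' E'"
  using simple by (rule simple_graph_del_vertex)

lemma in_V'_iff: "v \<in> V' \<longleftrightarrow> v \<in> V \<and> v \<noteq> w"
  by (auto simp: del_vertex_V_def)

lemma card_V'_ge: "6 * k + 12 \<le> card V'"
  using large w_in_V finite_vertices[OF simple] by (simp add: del_vertex_V_def)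

lemma N_ge: "6 * real k + 12 \<le> N"
  using card_V'_ge unfolding N_def by linarith

lemma N_pos: "0 < N"
  using N_ge by linarith

lemma dense_or_sparse_component:
  assumes "u \<in> V'"
  shows "card (component V' E' u) = 2 * k
           \<or> edges_in E' (component V' E' u) \<le> (k - 1) * card (component V' E' u)"
  using component_condition assms unfolding components_eq_image_component by blast

lemma weight_in_component:
  assumes "v \<in> component V' E' u"
  shows "weight v = (if card (component V' E' u) = 2 * k then 2 else real (degree E' v) + 1 - 1 / N)"
proof -
  have "v \<in> V'" using assms component_subset[of V' E' u] by blast
  then have "v \<noteq> w" by (simp add: in_V'_iff)
  then show ?thesis using component_eq[OF assms] by (simp add: weight_def)
qed

lemma weight_pos:
  assumes "v \<in> V"
  shows "0 < weight v"
proof -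
  have "1 / N < 1" using N_ge by simp
  then have "0 < real (degree E' v) + 1 - 1 / N" by linarith
  then show ?thesis using N_pos by (auto simp: weight_def)
qed

lemma weight_nonneg: "v \<in> V \<Longrightarrow> 0 \<le> weight v"
  using weight_pos by (rule less_imp_le)

lemma weight_le_N:
  assumes "v \<in> V'"
  shows "weight v \<le> N"
proof -
  have "degree E' v + 1 \<le> card V'" using degree_less_card[OF simple_del_vertex assms] by simp
  then have "real (degree E' v) + 1 \<le> N" unfolding N_def by linarith
  moreover have "0 < 1 / N" using N_pos by simp
  ultimately have "real (degree E' v) + 1 - 1 / N \<le> N" by linarith
  moreover have "2 \<le> N" using N_ge by linarith
  ultimately show ?thesis using assms by (simp add: weight_def in_V'_iff)
qed

lemma sum_weight_component:
  assumes u: "u \<in> V'"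
  shows "(\<Sum>v\<in>component V' E' u. weight v) \<le> (2 * real k - 1 - 1 / N) * card (component V' E' u)"
proof -
  define C where "C = component V' E' u"
  have "1 / N \<le> 1" using N_ge by simp
  show ?thesis
  proof (cases "card C = 2 * k")
    case True
    then have "(\<Sum>v\<in>C. weight v) = (\<Sum>v\<in>C. 2)"
      using weight_in_component[of _ u] by (intro sum.cong) (auto simp: C_def)
    also have "\<dots> = 2 * real (card C)" by simp
    also have "\<dots> \<le> (2 * real k - 1 - 1 / N) * real (card C)"
    proof (rule mult_right_mono)
      show "2 \<le> 2 * real k - 1 - 1 / N" using k_ge_2 \<open>1 / N \<le> 1\<close> by linarith
    qed simp
    finally show ?thesis unfolding C_def .
  next
    case False
    then have "edges_in E' C \<le> (k - 1) * card C"
      using dense_or_sparse_component[OF u] unfolding C_def by simp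
    then have "real (edges_in E' C) \<le> real ((k - 1) * card C)" by linarith
    also have "\<dots> = (real k - 1) * real (card C)" using k_ge_2 by (simp add: of_nat_diff)
    finally have edges: "real (edges_in E' C) \<le> (real k - 1) * real (card C)" .
    have "(\<Sum>v\<in>C. weight v) = (\<Sum>v\<in>C. real (degree E' v) + (1 - 1 / N))"
      using weight_in_component[of _ u] False by (intro sum.cong) (auto simp: C_def)
    also have "\<dots> = real (\<Sum>v\<in>C. degree E' v) + (1 - 1 / N) * real (card C)"
      by (simp add: sum.distrib)
    also have "\<dots> = 2 * real (edges_in E' C) + (1 - 1 / N) * real (card C)"
      using sum_degree_component[OF simple_del_vertex u] unfolding C_def by simp
    also have "\<dots> \<le> 2 * ((real k - 1) * real (card C)) + (1 - 1 / N) * real (card C)"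
      using edges by simp
    finally show ?thesis unfolding C_def by (simp add: algebra_simps)
  qed
qed

lemma sum_weight_V': "(\<Sum>v\<in>V'. weight v) \<le> (2 * real k - 1 - 1 / N) * N"
  using sum_le_by_components[OF finite_vertices[OF simple_del_vertex] sum_weight_component]
  unfolding N_def .

lemma sum_weight_neighbours:
  assumes u: "u \<in> V'"
  shows "(\<Sum>v\<in>neighbours E u. weight v) \<le> N + (\<Sum>v\<in>neighbours E' u. weight v)"
proof -
  have "u \<noteq> w" using u in_V'_iff by blast
  have fin: "finite (neighbours E' u)" by (rule finite_neighbours[OF simple_del_vertex])
  have sub: "neighbours E' u \<subseteq> V - {w}"
    using neighbours_subset[OF simple_del_vertex, of u] by (auto simp: in_V'_iff)
  have "(\<Sum>v\<in>neighbours E u. weight v) \<le> (\<Sum>v\<in>insert w (neighbours E' u). weight v)"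
    using fin neighbours_subset_del_vertex[OF \<open>u \<noteq> w\<close>, of E] sub w_in_V
    by (intro sum_mono2) (auto intro!: weight_nonneg)
  also have "\<dots> = weight w + (\<Sum>v\<in>neighbours E' u. weight v)"
    using fin sub by (subst sum.insert) auto
  also have "weight w = N" by (simp add: weight_def)
  finally show ?thesis .
qed

lemma weight_row_le:
  assumes u: "u \<in> V'"
  shows "(\<Sum>v\<in>V. signless_laplacian E u v * weight v)
           \<le> (real (degree E' u) + 1) * weight u + N + (\<Sum>v\<in>neighbours E' u. weight v)"
proof -
  have uV: "u \<in> V" "u \<noteq> w" using u in_V'_iff by blast+
  have "real (degree E u) * weight u \<le> (real (degree E' u) + 1) * weight u"
    using degree_le_degree_del_vertex[OF simple uV(2)] weight_pos[OF uV(1)]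
    by (intro mult_right_mono) auto
  then show ?thesis
    using signless_laplacian_row[OF simple uV(1), where z = weight] sum_weight_neighbours[OF u]
    by linarith
qed

lemma sum_weight_neighbours_sparse:
  assumes u: "u \<in> V'" and sparse: "card (component V' E' u) \<noteq> 2 * k"
  shows "(\<Sum>v\<in>neighbours E' u. weight v)
           \<le> (2 * real k - 3) * N + 1 + real (degree E' u) * (1 - 1 / N)"
proof -
  define C where "C = component V' E' u"
  define c where "c = real (card C)"
  have "edges_in E' C \<le> (k - 1) * card C"
    using dense_or_sparse_component[OF u] sparse unfolding C_def by simp
  then have "real (edges_in E' C) \<le> real ((k - 1) * card C)" by linarith
  also have "\<dots> = (real k - 1) * c" using k_ge_2 unfolding c_def by (simp add: of_nat_diff)
  finally have edges: "real (edges_in E' C) \<le> (real k - 1) * c" .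
  have "(2 * real k - 3) * c + c = 2 * ((real k - 1) * c)" by (simp add: algebra_simps)
  moreover have "card C \<le> card V'"
    unfolding C_def by (intro card_mono finite_vertices[OF simple_del_vertex] component_subset)
  then have "(2 * real k - 3) * c \<le> (2 * real k - 3) * N"
    using k_ge_2 unfolding N_def c_def by (intro mult_left_mono) auto
  moreover have "real (\<Sum>v\<in>neighbours E' u. degree E' v) + c \<le> 2 * real (edges_in E' C) + 1"
    using sum_degree_neighbours_le[OF simple_del_vertex u] unfolding C_def c_def by linarith
  moreover have "(\<Sum>v\<in>neighbours E' u. weight v)
      = real (\<Sum>v\<in>neighbours E' u. degree E' v) + real (degree E' u) * (1 - 1 / N)"
  proof -
    have "(\<Sum>v\<in>neighbours E' u. weight v) = (\<Sum>v\<in>neighbours E' u. real (degree E' v) + (1 - 1 / N))"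
      using weight_in_component[of _ u] neighbours_subset_component[OF simple_del_vertex u] sparse
      by (intro sum.cong) auto
    then show ?thesis using card_neighbours[OF simple_del_vertex] by (simp add: sum.distrib)
  qed
  ultimately show ?thesis using edges by linarith
qed

lemma weight_row_apex:
  "(\<Sum>v\<in>V. signless_laplacian E w v * weight v) < (N + 2 * real k - 1) * weight w"
proof -
  have weight_w: "weight w = N" by (simp add: weight_def)
  have "degree E w + 1 \<le> card V" using degree_less_card[OF simple w_in_V] by simp
  then have "real (degree E w) \<le> N"
    using w_in_V finite_vertices[OF simple] unfolding N_def by (simp add: del_vertex_V_def)
  then have deg: "real (degree E w) * N \<le> N * N" using N_pos by (intro mult_right_mono) auto
  have "neighbours E w \<subseteq> V'" using neighbours_subset[OF simple, of w] by (auto simp: del_vertex_V_def)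
  then have "(\<Sum>v\<in>neighbours E w. weight v) \<le> (\<Sum>v\<in>V'. weight v)"
    using finite_vertices[OF simple_del_vertex] by (intro sum_mono2) (auto simp: in_V'_iff intro!: weight_nonneg)
  moreover have "(2 * real k - 1 - 1 / N) * N = (2 * real k - 1) * N - 1"
    using N_pos by (simp add: algebra_simps)
  ultimately have nbs: "(\<Sum>v\<in>neighbours E w. weight v) \<le> (2 * real k - 1) * N - 1"
    using sum_weight_V' by linarith
  have "(\<Sum>v\<in>V. signless_laplacian E w v * weight v)
      = real (degree E w) * N + (\<Sum>v\<in>neighbours E w. weight v)"
    using signless_laplacian_row[OF simple w_in_V, where z = weight] weight_w by simp
  also have "\<dots> \<le> N * N + ((2 * real k - 1) * N - 1)" using deg nbs by (rule add_mono)
  also have "\<dots> < (N + 2 * real k - 1) * weight w" unfolding weight_w by (simp add: algebra_simps)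
  finally show ?thesis .
qed

lemma weight_row_dense:
  assumes u: "u \<in> V'" and dense: "card (component V' E' u) = 2 * k"
  shows "(\<Sum>v\<in>V. signless_laplacian E u v * weight v) < (N + 2 * real k - 1) * weight u"
proof -
  have weight_u: "weight u = 2"
    using weight_in_component[OF self_in_component[OF u]] dense by simp
  have "(\<Sum>v\<in>neighbours E' u. weight v) = (\<Sum>v\<in>neighbours E' u. 2)"
    using weight_in_component[of _ u] neighbours_subset_component[OF simple_del_vertex u] dense
    by (intro sum.cong) auto
  then have "(\<Sum>v\<in>neighbours E' u. weight v) = 2 * real (degree E' u)"
    using card_neighbours[OF simple_del_vertex] by simp
  then have "(\<Sum>v\<in>V. signless_laplacian E u v * weight v)
      \<le> (real (degree E' u) + 1) * 2 + N + 2 * real (degree E' u)"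
    using weight_row_le[OF u] unfolding weight_u by simp
  also have "\<dots> = 4 * real (degree E' u) + 2 + N" by (simp add: algebra_simps)
  also have "\<dots> < 2 * N + 4 * real k - 2"
    using degree_less_card_component[OF simple_del_vertex u] dense N_ge k_ge_2 by linarith
  also have "\<dots> = (N + 2 * real k - 1) * weight u" unfolding weight_u by (simp add: algebra_simps)
  finally show ?thesis .
qed

lemma weight_row_sparse:
  assumes u: "u \<in> V'" and sparse: "card (component V' E' u) \<noteq> 2 * k"
  shows "(\<Sum>v\<in>V. signless_laplacian E u v * weight v) < (N + 2 * real k - 1) * weight u"
proof -
  define d where "d = degree E' u"
  have weight_u: "weight u = real d + 1 - 1 / N"
    using weight_in_component[OF self_in_component[OF u]] sparse by (simp add: d_def)
  have row: "(\<Sum>v\<in>V. signless_laplacian E u v * weight v)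
      \<le> (real d + 1) * (real d + 1 - 1 / N) + N + (\<Sum>v\<in>neighbours E' u. weight v)"
    using weight_row_le[OF u] unfolding weight_u d_def .
  show ?thesis
  proof (cases "d + 3 \<le> 2 * k")
    case True
    have "(\<Sum>v\<in>neighbours E' u. weight v) \<le> (\<Sum>v\<in>neighbours E' u. N)"
      using weight_le_N neighbours_subset[OF simple_del_vertex, of u] by (intro sum_mono) blast
    then have "(\<Sum>v\<in>neighbours E' u. weight v) \<le> real d * N"
      using card_neighbours[OF simple_del_vertex] by (simp add: d_def)
    from order_trans[OF row add_left_mono[OF this]]
    have "(\<Sum>v\<in>V. signless_laplacian E u v * weight v)
        \<le> (real d + 1) * (real d + 1 - 1 / N) + N + real d * N" .
    also have "\<dots> < (N + 2 * real k - 1) * (real d + 1 - 1 / N)"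
      by (rule low_degree_row_ineq[OF card_V'_ge k_ge_2 True, folded N_def])
    finally show ?thesis unfolding weight_u .
  next
    case False
    then have high: "2 * k \<le> d + 2" by linarith
    have "d < card V'" unfolding d_def by (rule degree_less_card[OF simple_del_vertex u])
    note nbs = sum_weight_neighbours_sparse[OF u sparse, folded d_def]
    from order_trans[OF row add_left_mono[OF nbs]]
    have "(\<Sum>v\<in>V. signless_laplacian E u v * weight v)
        \<le> (real d + 1) * (real d + 1 - 1 / N) + N + ((2 * real k - 3) * N + 1 + real d * (1 - 1 / N))" .
    also have "\<dots> = (real d + 1) * (real d + 1 - 1 / N) + N + ((2 * real k - 3) * N + 1)
        + real d * (1 - 1 / N)"
      by (simp only: add.assoc)
    also have "\<dots> < (N + 2 * real k - 1) * (real d + 1 - 1 / N)"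
      by (rule high_degree_row_ineq[OF card_V'_ge k_ge_2 high \<open>d < card V'\<close>, folded N_def])
    finally show ?thesis unfolding weight_u .
  qed
qed

lemma weight_row:
  assumes "u \<in> V"
  shows "(\<Sum>v\<in>V. signless_laplacian E u v * weight v) < (N + 2 * real k - 1) * weight u"
proof (cases "u = w")
  case False
  with assms have "u \<in> V'" by (simp add: in_V'_iff)
  then show ?thesis using weight_row_dense weight_row_sparse by blast
qed (simp add: weight_row_apex)

end

theorem corollary2:
  fixes V :: "'a set" and E :: "'a set set" and w :: 'a and k n :: nat
  assumes "simple_graph V E"
    and "k \<ge> 2"
    and "n = card V"
    and "w \<in> V"
    and "\<forall>C\<in>components (del_vertex_V V w) (del_vertex_E E w).
           card C = 2 * k \<or> edges_in (del_vertex_E E w) C \<le> (k - 1) * card C"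
    and "n \<ge> 6 * k + 13"
  shows "q_index V E < real n + 2 * real k - 2"
proof -
  interpret sparse_components_minus_vertex V E w k
    by unfold_locales (use assms in auto)
  have "card V' = n - 1"
    using assms(3,4) finite_vertices[OF simple] by (simp add: del_vertex_V_def)
  then have "N = real n - 1" using assms(6) unfolding N_def by (simp add: of_nat_diff)
  moreover have "q_index V E < N + 2 * real k - 1"
    by (rule q_index_less_of_row_bound[where z = weight])
      (use finite_vertices[OF simple] w_in_V weight_pos weight_row in auto)
  ultimately show ?thesis by simp
qed

end
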